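(* Let $f,g:\mathbb{R}^2\to\mathbb{R}$ be Lipschitz continuous, let $(J,W)$ be a graphon and let $A\subseteq J$ be a measurable set of positive measure. Suppose that all the vertices in $A$ are twins. Then the cluster subspace $\mathcal C(A)$ is dynamically invariant for the graphon dynamical system $\mathcal D(J,W)$.
   Context: A graphon $(J,W)$ consists of a probability space $J=(\Omega,\mathcal A,\mu)$ and a symmetric measurable $W:\Omega\times\Omega\to[0,1]$. The graphon dynamical system $\mathcal D(J,W)$ is the flow on $L^1(J)$ given by $\dot u_x=f\big(u_x,\int_J W(x,y)g(u_x,u_y)\,d\mu(y)\big)$, where for each $t$ the equation holds for almost every $x$. The elements of a measurable set $A$ are twins if the function $y\mapsto W(x,y)$ (as an element of $L^1$, i.e. up to null sets) does not depend on $x\in A$. The cluster subspace $\mathcal C(A)$ is the set of $u\in L^1(J)$ that are constant on $A$ up to a null set. A subset is dynamically invariant if every trajectory starting in it stays in it for all $t\in\mathbb{R}$. *)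

theory Defs
  imports "HOL-Probability.Probability"
begin

definition graphon :: "'a measure \<Rightarrow> ('a \<Rightarrow> 'a \<Rightarrow> real) \<Rightarrow> bool" where
  "graphon M W \<longleftrightarrow> prob_space M
     \<and> (\<lambda>(x,y). W x y) \<in> borel_measurable (M \<Otimes>\<^sub>M M)
     \<and> (\<forall>x\<in>space M. \<forall>y\<in>space M. W x y = W y x)
     \<and> (\<forall>x\<in>space M. \<forall>y\<in>space M. 0 \<le> W x y \<and> W x y \<le> 1)"

definition lipschitz2 :: "(real \<Rightarrow> real \<Rightarrow> real) \<Rightarrow> bool" where
  "lipschitz2 f \<longleftrightarrow> (\<exists>C. C-lipschitz_on UNIV (\<lambda>(a,b). f a b))"

definition graphon_rhs ::
  "(real \<Rightarrow> real \<Rightarrow> real) \<Rightarrow> (real \<Rightarrow> real \<Rightarrow> real) \<Rightarrow> 'a measure \<Rightarrow> ('a \<Rightarrow> 'a \<Rightarrow> real)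
    \<Rightarrow> ('a \<Rightarrow> real) \<Rightarrow> 'a \<Rightarrow> real" where
  "graphon_rhs f g M W u x = f (u x) (\<integral>y. W x y * g (u x) (u y) \<partial>M)"

text \<open>A trajectory of D(J,W): a map from time (all of R) into L^1(J) that is differentiable
  in the L^1 norm with derivative given by the right-hand side.\<close>
definition graphon_trajectory ::
  "(real \<Rightarrow> real \<Rightarrow> real) \<Rightarrow> (real \<Rightarrow> real \<Rightarrow> real) \<Rightarrow> 'a measure \<Rightarrow> ('a \<Rightarrow> 'a \<Rightarrow> real)
    \<Rightarrow> (real \<Rightarrow> 'a \<Rightarrow> real) \<Rightarrow> bool" where
  "graphon_trajectory f g M W u \<longleftrightarrow>
     (\<forall>t. integrable M (u t)) \<and>
     (\<forall>t. ((\<lambda>h. \<integral>\<^sup>+x. ennreal \<bar>(u (t + h) x - u t x) / h - graphon_rhs f g M W (u t) x\<bar> \<partial>M)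
            \<longlongrightarrow> 0) (at 0))"

text \<open>Twins: the L^1 class of y \<mapsto> W x y is the same for all x in A.\<close>
definition twins :: "'a measure \<Rightarrow> ('a \<Rightarrow> 'a \<Rightarrow> real) \<Rightarrow> 'a set \<Rightarrow> bool" where
  "twins M W A \<longleftrightarrow> (\<forall>x\<in>A. \<forall>x'\<in>A. AE y in M. W x y = W x' y)"

definition cluster_subspace :: "'a measure \<Rightarrow> 'a set \<Rightarrow> ('a \<Rightarrow> real) set" where
  "cluster_subspace M A = {u. integrable M u \<and> (\<exists>c. AE x in M. x \<in> A \<longrightarrow> u x = c)}"

definition dyn_invariant ::
  "(real \<Rightarrow> real \<Rightarrow> real) \<Rightarrow> (real \<Rightarrow> real \<Rightarrow> real) \<Rightarrow> 'a measure \<Rightarrow> ('a \<Rightarrow> 'a \<Rightarrow> real)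
    \<Rightarrow> ('a \<Rightarrow> real) set \<Rightarrow> bool" where
  "dyn_invariant f g M W S \<longleftrightarrow>
     (\<forall>u t0. graphon_trajectory f g M W u \<and> u t0 \<in> S \<longrightarrow> (\<forall>t. u t \<in> S))"

end

(* Let P(t) be the mean absolute deviation of u(t) on A from its average over A.  Since the
   vertices of A are twins, on A the right-hand side of the system is G_t(u_t x) for a single
   function G_t that is Lipschitz with a constant K independent of t.  Hence u(t+h) - u(t) is,
   on A and up to o(h) in L^1, equal to h G_t(u_t), which changes P by at most 2|h|(K P(t) + o(1)).
   A Gronwall argument for functions satisfying only this difference-quotient bound shows that P
   vanishes identically once it vanishes at one time, i.e. u(t) stays a.e. constant on A. *)

theory Submission
  imports Defs
begin

text \<open>The bound \<open>|P'| \<le> K P\<close> in difference-quotient form, without assuming that \<open>P\<close> is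
  differentiable.\<close>

definition rate_bounded :: "real \<Rightarrow> (real \<Rightarrow> real) \<Rightarrow> bool" where
  "rate_bounded K P \<longleftrightarrow>
     (\<forall>t \<eta>. \<eta> > 0 \<longrightarrow> (\<forall>\<^sub>F h in at 0. \<bar>P (t + h) - P t\<bar> \<le> \<bar>h\<bar> * (K * P t + \<eta>)))"

lemma rate_boundedD:
  "rate_bounded K P \<Longrightarrow> \<eta> > 0 \<Longrightarrow> \<forall>\<^sub>F h in at 0. \<bar>P (t + h) - P t\<bar> \<le> \<bar>h\<bar> * (K * P t + \<eta>)"
  unfolding rate_bounded_def by blast

lemma rate_bounded_isCont:
  assumes "rate_bounded K P"
  shows "isCont P t"
proof -
  have "\<forall>\<^sub>F h in at 0. norm (P (t + h) - P t) \<le> \<bar>h\<bar> * (K * P t + 1)"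
    using rate_boundedD[OF assms, of 1 t] by simp
  moreover have "((\<lambda>h. \<bar>h\<bar> * (K * P t + 1)) \<longlongrightarrow> 0) (at 0)"
    by (intro tendsto_mult_left_zero tendsto_rabs_zero tendsto_ident_at)
  ultimately have "((\<lambda>h. P (t + h) - P t) \<longlongrightarrow> 0) (at 0)"
    by (rule Lim_null_comparison)
  then show ?thesis
    unfolding isCont_iff LIM_zero_iff .
qed

lemma rate_bounded_reflect:
  assumes "rate_bounded K P"
  shows "rate_bounded K (\<lambda>t. P (- t))"
  unfolding rate_bounded_def
proof (intro allI impI)
  fix t \<eta> :: real assume "\<eta> > 0"
  then have "\<forall>\<^sub>F h in at 0. \<bar>P (- t + h) - P (- t)\<bar> \<le> \<bar>h\<bar> * (K * P (- t) + \<eta>)"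
    by (rule rate_boundedD[OF assms])
  then have "\<forall>\<^sub>F h in filtermap uminus (at 0). \<bar>P (- t + h) - P (- t)\<bar> \<le> \<bar>h\<bar> * (K * P (- t) + \<eta>)"
    by (simp add: filtermap_at_minus)
  then show "\<forall>\<^sub>F h in at 0. \<bar>P (- (t + h)) - P (- t)\<bar> \<le> \<bar>h\<bar> * (K * P (- t) + \<eta>)"
    unfolding eventually_filtermap by simp
qed

lemma rate_bounded_le_exp_at_right:
  assumes "rate_bounded K P" and "K \<ge> 0" and "b > 0" and "P t \<le> b"
  shows "\<forall>\<^sub>F s in at_right t. P s \<le> b * exp ((K + 1) * (s - t))"
proof -
  have "\<forall>\<^sub>F h in at 0. \<bar>P (t + h) - P t\<bar> \<le> \<bar>h\<bar> * (K * P t + b)"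
    by (rule rate_boundedD[OF assms(1,3)])
  then have "\<forall>\<^sub>F s in at t. \<bar>P s - P t\<bar> \<le> \<bar>s - t\<bar> * (K * P t + b)"
    unfolding eventually_at_to_0[of _ t] by (simp add: add.commute)
  then have "\<forall>\<^sub>F s in at_right t. \<bar>P s - P t\<bar> \<le> \<bar>s - t\<bar> * (K * P t + b)"
    by (simp add: eventually_at_split)
  moreover have "\<forall>\<^sub>F s in at_right t. s > t"
    by (simp add: eventually_at_right_less)
  ultimately show ?thesis
  proof eventually_elim
    case (elim s)
    have "P s \<le> P t + (s - t) * (K * P t + b)"
      using elim by auto
    also have "\<dots> \<le> b + (s - t) * (K * b + b)"
      using elim assms(2,4) by (intro add_mono mult_left_mono) auto
    also have "\<dots> = b * (1 + (K + 1) * (s - t))"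
      by (simp add: algebra_simps)
    also have "\<dots> \<le> b * exp ((K + 1) * (s - t))"
      using assms(3) by (intro mult_left_mono) (auto simp: add.commute exp_ge_add_one_self)
    finally show ?case .
  qed
qed

lemma real_interval_induct:
  fixes a b :: real
  assumes "a \<le> b" and "Q a"
    and left: "\<And>T. a < T \<Longrightarrow> T \<le> b \<Longrightarrow> (\<And>s. a \<le> s \<Longrightarrow> s < T \<Longrightarrow> Q s) \<Longrightarrow> Q T"
    and right: "\<And>T. a \<le> T \<Longrightarrow> T < b \<Longrightarrow> (\<And>s. a \<le> s \<Longrightarrow> s \<le> T \<Longrightarrow> Q s) \<Longrightarrow>
                  \<forall>\<^sub>F s in at_right T. Q s"
  shows "Q b"
proof -
  define S where "S = {r \<in> {a..b}. \<forall>s\<in>{a..r}. Q s}"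
  define T where "T = Sup S"
  have "a \<in> S"
    using assms(1,2) by (simp add: S_def)
  have bdd: "bdd_above S"
    unfolding S_def by (rule bdd_aboveI[of _ b]) auto
  have T_bounds: "a \<le> T" "T \<le> b"
    using \<open>a \<in> S\<close> bdd unfolding T_def by (auto intro!: cSup_upper cSup_least simp: S_def)
  have below_T: "Q s" if "a \<le> s" "s < T" for s
  proof -
    obtain r where "r \<in> S" "s < r"
      using \<open>s < T\<close> less_cSup_iff[OF _ bdd] \<open>a \<in> S\<close> unfolding T_def by blast
    with that show ?thesis
      unfolding S_def by auto
  qed
  have "Q T"
    using assms(2) T_bounds below_T left by (cases "T = a") auto
  with below_T have below_eq_T: "Q s" if "a \<le> s" "s \<le> T" for s
    using that by (cases "s = T") auto
  with T_bounds have "T \<in> S"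
    by (simp add: S_def)
  have "T = b"
  proof (rule ccontr)
    assume "T \<noteq> b"
    with T_bounds have "T < b" by simp
    then obtain c where "c > T" and c: "\<And>s. T < s \<Longrightarrow> s < c \<Longrightarrow> Q s"
      using right[OF \<open>a \<le> T\<close> _ below_eq_T] by (auto simp: eventually_at_right_field)
    define r where "r = min b ((T + c) / 2)"
    have "r > T"
      using \<open>c > T\<close> \<open>T < b\<close> by (simp add: r_def)
    moreover have "r \<in> S"
      using \<open>T \<in> S\<close> \<open>c > T\<close> \<open>r > T\<close> T_bounds c unfolding S_def r_def by (auto simp: not_le)
    ultimately show False
      using cSup_upper[OF _ bdd] unfolding T_def by fastforce
  qed
  with \<open>T \<in> S\<close> show ?thesis
    by (simp add: S_def)
qed

lemma rate_bounded_le_exp: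
  assumes rate: "rate_bounded K P" and "K \<ge> 0" and "\<epsilon> > 0"
    and start: "P t0 \<le> \<epsilon>" and "t0 \<le> t"
  shows "P t \<le> \<epsilon> * exp ((K + 1) * (t - t0))"
proof -
  define B where "B s = \<epsilon> * exp ((K + 1) * (s - t0))" for s
  have "P t \<le> B t"
  proof (rule real_interval_induct[where Q = "\<lambda>s. P s \<le> B s", OF \<open>t0 \<le> t\<close>])
    show "P t0 \<le> B t0"
      using start by (simp add: B_def)
  next
    fix T
    assume "t0 < T" "T \<le> t" and below: "\<And>s. t0 \<le> s \<Longrightarrow> s < T \<Longrightarrow> P s \<le> B s"
    have "\<forall>\<^sub>F s in at_left T. P s \<le> B s"
      unfolding eventually_at_left_field using \<open>t0 < T\<close> below by (intro exI[of _ t0]) auto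
    moreover have "isCont P T" "isCont B T"
      using rate_bounded_isCont[OF rate] unfolding B_def by (auto intro: continuous_intros)
    then have "(P \<longlongrightarrow> P T) (at_left T)" "(B \<longlongrightarrow> B T) (at_left T)"
      using filterlim_at_split unfolding isCont_def by blast+
    ultimately show "P T \<le> B T"
      by (intro tendsto_le[of "at_left T" B _ P]) auto
  next
    fix T
    assume "t0 \<le> T" "T < t" and upto: "\<And>s. t0 \<le> s \<Longrightarrow> s \<le> T \<Longrightarrow> P s \<le> B s"
    have "\<forall>\<^sub>F s in at_right T. P s \<le> B T * exp ((K + 1) * (s - T))"
      using rate_bounded_le_exp_at_right[OF rate \<open>K \<ge> 0\<close> _ upto[OF \<open>t0 \<le> T\<close> order_refl]]
        \<open>\<epsilon> > 0\<close> by (simp add: B_def)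
    moreover have "B T * exp ((K + 1) * (s - T)) = B s" for s
      by (simp add: B_def mult.assoc exp_add[symmetric] algebra_simps)
    ultimately show "\<forall>\<^sub>F s in at_right T. P s \<le> B s"
      by simp
  qed
  then show ?thesis
    by (simp add: B_def)
qed

lemma rate_bounded_eq_0_after:
  assumes "rate_bounded K P" and "K \<ge> 0" and "\<And>t. P t \<ge> 0"
    and "P t0 = 0" and "t0 \<le> t"
  shows "P t = 0"
proof -
  define c where "c = exp ((K + 1) * (t - t0))"
  have "c > 0"
    by (simp add: c_def)
  have "P t \<le> 0 + e" if "e > 0" for e
    using rate_bounded_le_exp[OF assms(1,2), of "e / c" t0 t] assms(4,5) \<open>e > 0\<close> \<open>c > 0\<close>
    unfolding c_def by simp
  then have "P t \<le> 0"
    by (rule field_le_epsilon)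
  with assms(3)[of t] show ?thesis
    by simp
qed

lemma rate_bounded_eq_0:
  assumes "rate_bounded K P" and "K \<ge> 0" and "\<And>t. P t \<ge> 0" and "P t0 = 0"
  shows "P t = 0"
proof (cases "t0 \<le> t")
  case True
  then show ?thesis using rate_bounded_eq_0_after[OF assms] by blast
next
  case False
  have "P (- (- t)) = 0"
    using rate_bounded_eq_0_after[OF rate_bounded_reflect[OF assms(1)] assms(2), of "- t0" "- t"]
      assms(3,4) False by simp
  then show ?thesis by simp
qed

definition cluster_mean :: "'a measure \<Rightarrow> 'a set \<Rightarrow> ('a \<Rightarrow> real) \<Rightarrow> real" where
  "cluster_mean M A v = (LINT x:A|M. v x) / measure M A"

definition cluster_dispersion :: "'a measure \<Rightarrow> 'a set \<Rightarrow> ('a \<Rightarrow> real) \<Rightarrow> real" where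
  "cluster_dispersion M A v = (LINT x:A|M. \<bar>v x - cluster_mean M A v\<bar>)"

lemma cluster_dispersion_nonneg: "cluster_dispersion M A v \<ge> 0"
  unfolding cluster_dispersion_def set_lebesgue_integral_def by (simp add: integral_nonneg_AE)

context
  fixes M :: "'a measure" and A :: "'a set"
  assumes A_sets: "A \<in> sets M" and A_pos: "measure M A > 0"
begin

private lemma A_finite: "emeasure M A < \<infinity>"
  using A_pos measure_zero_top by (fastforce simp: less_top)

private lemma set_integrable_const [simp, intro]: "set_integrable M A (\<lambda>_. c)"
  unfolding set_integrable_def using A_sets A_finite by (intro integrable_scaleR_left) simp

private lemma set_integrable_of_integrable [simp, intro]:
  fixes f :: "'a \<Rightarrow> real"
  shows "integrable M f \<Longrightarrow> set_integrable M A f"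
  unfolding set_integrable_def using A_sets by (rule integrable_mult_indicator)

private lemma set_integrable_abs_diff [simp, intro]:
  fixes f :: "'a \<Rightarrow> real"
  shows "integrable M f \<Longrightarrow> set_integrable M A (\<lambda>x. \<bar>f x - c\<bar>)"
  by (intro set_integrable_abs set_integral_diff(1)) auto

private lemma cluster_integral_const [simp]: "(LINT x:A|M. c) = c * measure M A"
  using set_integral_const[OF A_sets, of c] A_finite by simp

lemma cluster_mean_diff:
  "integrable M v \<Longrightarrow> integrable M w \<Longrightarrow>
    cluster_mean M A (\<lambda>x. w x - v x) = cluster_mean M A w - cluster_mean M A v"
  unfolding cluster_mean_def by (simp add: diff_divide_distrib)

lemma cluster_mean_deviation:
  assumes "integrable M v"
  shows "\<bar>cluster_mean M A v - c\<bar> * measure M A \<le> (LINT x:A|M. \<bar>v x - c\<bar>)"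
proof -
  have "(cluster_mean M A v - c) * measure M A = (LINT x:A|M. v x - c)"
    using assms A_pos by (simp add: cluster_mean_def left_diff_distrib)
  also have "\<bar>\<dots>\<bar> \<le> (LINT x:A|M. \<bar>v x - c\<bar>)"
    using set_integral_norm_bound[of M A "\<lambda>x. v x - c"] assms by simp
  finally show ?thesis
    using A_pos by (simp add: abs_mult)
qed

lemma cluster_dispersion_le_deviation:
  assumes "integrable M v"
  shows "cluster_dispersion M A v \<le> 2 * (LINT x:A|M. \<bar>v x - c\<bar>)"
proof -
  let ?m = "cluster_mean M A v"
  have "cluster_dispersion M A v \<le> (LINT x:A|M. \<bar>v x - c\<bar> + \<bar>?m - c\<bar>)"
    unfolding cluster_dispersion_def using assms by (intro set_integral_mono set_integral_add(1)) auto
  also have "\<dots> = (LINT x:A|M. \<bar>v x - c\<bar>) + \<bar>?m - c\<bar> * measure M A"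
    using assms by simp
  also have "\<dots> \<le> 2 * (LINT x:A|M. \<bar>v x - c\<bar>)"
    using cluster_mean_deviation[OF assms] by simp
  finally show ?thesis .
qed

lemma cluster_dispersion_diff_le:
  assumes "integrable M v" "integrable M w"
  shows "\<bar>cluster_dispersion M A w - cluster_dispersion M A v\<bar>
           \<le> cluster_dispersion M A (\<lambda>x. w x - v x)"
proof -
  let ?mv = "cluster_mean M A v" and ?mw = "cluster_mean M A w"
  have "cluster_dispersion M A w - cluster_dispersion M A v
          = (LINT x:A|M. \<bar>w x - ?mw\<bar> - \<bar>v x - ?mv\<bar>)"
    unfolding cluster_dispersion_def using assms by (simp add: set_integral_diff(2))
  also have "\<bar>\<dots>\<bar> \<le> (LINT x:A|M. \<bar>\<bar>w x - ?mw\<bar> - \<bar>v x - ?mv\<bar>\<bar>)"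
    using set_integral_norm_bound[of M A "\<lambda>x. \<bar>w x - ?mw\<bar> - \<bar>v x - ?mv\<bar>"] assms by simp
  also have "\<dots> \<le> (LINT x:A|M. \<bar>(w x - v x) - (?mw - ?mv)\<bar>)"
    using assms by (intro set_integral_mono set_integrable_abs set_integral_diff(1)) auto
  finally show ?thesis
    unfolding cluster_dispersion_def cluster_mean_diff[OF assms] .
qed

text \<open>The increment \<open>w - v\<close> is close to \<open>h G(v)\<close>, which on \<open>A\<close> deviates from the constant
  \<open>h G(m)\<close>, \<open>m\<close> the cluster mean of \<open>v\<close>, by at most \<open>|h| K |v - m|\<close>.\<close>

lemma cluster_dispersion_increment_bound:
  assumes v: "integrable M v" and w: "integrable M w" and Gv: "integrable M (\<lambda>x. G (v x))"
    and G: "K-lipschitz_on UNIV G" and "h \<noteq> 0"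
  shows "\<bar>cluster_dispersion M A w - cluster_dispersion M A v\<bar>
           \<le> 2 * \<bar>h\<bar> * (K * cluster_dispersion M A v + (LINT x:A|M. \<bar>(w x - v x) / h - G (v x)\<bar>))"
proof -
  let ?m = "cluster_mean M A v" and ?q = "\<lambda>x. (w x - v x) / h - G (v x)"
  have pointwise: "\<bar>w x - v x - h * G ?m\<bar> \<le> \<bar>h\<bar> * (\<bar>?q x\<bar> + K * \<bar>v x - ?m\<bar>)" for x
  proof -
    have "w x - v x - h * G ?m = h * (?q x + (G (v x) - G ?m))"
      using \<open>h \<noteq> 0\<close> by (simp add: field_simps)
    moreover have "\<bar>G (v x) - G ?m\<bar> \<le> K * \<bar>v x - ?m\<bar>"
      using lipschitz_onD[OF G] by (simp add: dist_real_def)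
    ultimately show ?thesis
      by (simp add: abs_mult mult_left_mono abs_triangle_ineq[THEN order_trans])
  qed
  have integrable_q: "integrable M ?q"
    using v w Gv by simp
  have "\<bar>cluster_dispersion M A w - cluster_dispersion M A v\<bar> \<le> cluster_dispersion M A (\<lambda>x. w x - v x)"
    by (rule cluster_dispersion_diff_le[OF v w])
  also have "\<dots> \<le> 2 * (LINT x:A|M. \<bar>w x - v x - h * G ?m\<bar>)"
    using v w by (intro cluster_dispersion_le_deviation) auto
  also have "\<dots> \<le> 2 * (LINT x:A|M. \<bar>h\<bar> * (\<bar>?q x\<bar> + K * \<bar>v x - ?m\<bar>))"
    using v w integrable_q pointwise
    by (intro mult_left_mono set_integral_mono set_integral_add(1) set_integrable_mult_right
        set_integrable_abs) auto
  also have "\<dots> = 2 * \<bar>h\<bar> * (K * cluster_dispersion M A v + (LINT x:A|M. \<bar>?q x\<bar>))"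
    using v integrable_q
    by (simp add: cluster_dispersion_def set_integral_add(2) set_integrable_abs)
  finally show ?thesis .
qed

lemma cluster_subspace_iff_dispersion:
  "u \<in> cluster_subspace M A \<longleftrightarrow> integrable M u \<and> cluster_dispersion M A u = 0"
proof (cases "integrable M u")
  case True
  then have [measurable]: "u \<in> borel_measurable M"
    by blast
  let ?m = "cluster_mean M A u"
  have "(\<exists>c. AE x\<in>A in M. u x = c) \<longleftrightarrow> cluster_dispersion M A u = 0"
  proof
    assume "\<exists>c. AE x\<in>A in M. u x = c"
    then obtain c where c: "AE x\<in>A in M. u x = c" ..
    have "(LINT x:A|M. u x) = (LINT x:A|M. c)"
      using c A_sets by (intro set_lebesgue_integral_cong_AE) auto
    then have "?m = c"
      using A_pos by (simp add: cluster_mean_def)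
    then have "cluster_dispersion M A u = (LINT x:A|M. 0)"
      unfolding cluster_dispersion_def using c A_sets by (intro set_lebesgue_integral_cong_AE) auto
    then show "cluster_dispersion M A u = 0"
      by simp
  next
    assume "cluster_dispersion M A u = 0"
    moreover have "integrable M (\<lambda>x. indicator A x *\<^sub>R \<bar>u x - ?m\<bar>)"
      using set_integrable_abs_diff[OF True] unfolding set_integrable_def .
    ultimately have "AE x in M. indicator A x *\<^sub>R \<bar>u x - ?m\<bar> = 0"
      unfolding cluster_dispersion_def set_lebesgue_integral_def
      by (subst (asm) integral_nonneg_eq_0_iff_AE) auto
    then have "AE x\<in>A in M. u x = ?m"
      by eventually_elim (auto simp: indicator_def)
    then show "\<exists>c. AE x\<in>A in M. u x = c" ..
  qed
  with True show ?thesis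
    unfolding cluster_subspace_def by simp
qed (simp add: cluster_subspace_def)

end

lemma lipschitz2_partials:
  assumes "lipschitz2 f"
  obtains L where "\<And>b. L-lipschitz_on UNIV (\<lambda>a. f a b)" and "\<And>a. L-lipschitz_on UNIV (f a)"
proof -
  obtain L where L: "L-lipschitz_on UNIV (\<lambda>(a, b). f a b)"
    using assms unfolding lipschitz2_def by blast
  have "L \<ge> 0"
    using L by (rule lipschitz_on_nonneg)
  have "dist (f a b) (f a' b) \<le> L * dist a a'" for a a' b
    using lipschitz_onD[OF L, of "(a, b)" "(a', b)"] by (simp add: dist_Pair_Pair)
  moreover have "dist (f a b) (f a b') \<le> L * dist b b'" for a b b'
    using lipschitz_onD[OF L, of "(a, b)" "(a, b')"] by (simp add: dist_Pair_Pair)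
  ultimately show ?thesis
    using \<open>L \<ge> 0\<close> by (intro that lipschitz_onI) auto
qed

lemma lipschitz_on_compose_diag:
  fixes f :: "real \<Rightarrow> real \<Rightarrow> real"
  assumes f1: "\<And>b. L-lipschitz_on UNIV (\<lambda>a. f a b)" and f2: "\<And>a. L-lipschitz_on UNIV (f a)"
    and I: "K-lipschitz_on UNIV I"
  shows "(L * (1 + K))-lipschitz_on UNIV (\<lambda>c. f c (I c))"
proof (rule lipschitz_onI)
  fix a b :: real
  have "L \<ge> 0"
    using f2 by (rule lipschitz_on_nonneg)
  have "dist (f a (I a)) (f b (I a)) \<le> L * dist a b"
    using lipschitz_onD[OF f1] by simp
  moreover have "dist (f b (I a)) (f b (I b)) \<le> L * dist (I a) (I b)"
    using lipschitz_onD[OF f2] by simp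
  moreover have "L * dist (I a) (I b) \<le> L * (K * dist a b)"
    using lipschitz_onD[OF I] \<open>L \<ge> 0\<close> by (simp add: mult_left_mono)
  ultimately show "dist (f a (I a)) (f b (I b)) \<le> L * (1 + K) * dist a b"
    using dist_triangle[of "f a (I a)" "f b (I b)" "f b (I a)"] by (simp add: algebra_simps)
next
  show "0 \<le> L * (1 + K)"
    using lipschitz_on_nonneg[OF f2] lipschitz_on_nonneg[OF I] by simp
qed

lemma (in finite_measure) integrable_lipschitz_comp:
  fixes G :: "real \<Rightarrow> real"
  assumes G: "K-lipschitz_on UNIV G" and v: "integrable M v"
  shows "integrable M (\<lambda>x. G (v x))"
proof (rule Bochner_Integration.integrable_bound)
  show "integrable M (\<lambda>x. \<bar>G 0\<bar> + K * \<bar>v x\<bar>)"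
    using v by simp
  show "(\<lambda>x. G (v x)) \<in> borel_measurable M"
    using lipschitz_on_continuous_on[OF G] v by (auto intro: borel_measurable_continuous_on)
  have "\<bar>G (v x)\<bar> \<le> \<bar>G 0\<bar> + K * \<bar>v x\<bar>" for x
    using lipschitz_onD[OF G, of "v x" 0] by (simp add: dist_real_def)
  then show "AE x in M. norm (G (v x)) \<le> norm (\<bar>G 0\<bar> + K * \<bar>v x\<bar>)"
    using lipschitz_on_nonneg[OF G] by simp
qed

lemma (in prob_space) lipschitz_on_weighted_integral:
  fixes g :: "real \<Rightarrow> real \<Rightarrow> real"
  assumes w: "w \<in> borel_measurable M" "\<And>y. y \<in> space M \<Longrightarrow> \<bar>w y\<bar> \<le> 1"
    and integrable_g: "\<And>c. integrable M (\<lambda>y. g c (v y))"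
    and g: "\<And>b. L-lipschitz_on UNIV (\<lambda>c. g c b)"
  shows "L-lipschitz_on UNIV (\<lambda>c. \<integral>y. w y * g c (v y) \<partial>M)"
proof (rule lipschitz_onI)
  have integrable: "integrable M (\<lambda>y. w y * g c (v y))" for c
  proof (rule Bochner_Integration.integrable_bound[OF integrable_g[of c]])
    show "AE y in M. norm (w y * g c (v y)) \<le> norm (g c (v y))"
      using w(2) by (auto simp: abs_mult intro!: mult_left_le_one_le)
  qed (use w integrable_g in auto)
  fix a b :: real
  have "\<bar>(\<integral>y. w y * g a (v y) \<partial>M) - (\<integral>y. w y * g b (v y) \<partial>M)\<bar>
          = \<bar>\<integral>y. w y * (g a (v y) - g b (v y)) \<partial>M\<bar>"
    using integrable by (simp add: right_diff_distrib)
  also have "\<dots> \<le> (\<integral>y. \<bar>w y * (g a (v y) - g b (v y))\<bar> \<partial>M)"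
    by (rule integral_abs_bound)
  also have "\<dots> \<le> (\<integral>y. L * \<bar>a - b\<bar> \<partial>M)"
  proof (rule integral_mono)
    show "integrable M (\<lambda>y. \<bar>w y * (g a (v y) - g b (v y))\<bar>)"
      using integrable by (simp add: right_diff_distrib)
    fix y assume "y \<in> space M"
    have "\<bar>g a (v y) - g b (v y)\<bar> \<le> L * \<bar>a - b\<bar>"
      using lipschitz_onD[OF g, of a b "v y"] by (simp add: dist_real_def)
    then show "\<bar>w y * (g a (v y) - g b (v y))\<bar> \<le> L * \<bar>a - b\<bar>"
      unfolding abs_mult using w(2)[OF \<open>y \<in> space M\<close>]
      by (intro order_trans[OF mult_left_le_one_le]) auto
  qed simp
  finally show "dist (\<integral>y. w y * g a (v y) \<partial>M) (\<integral>y. w y * g b (v y) \<partial>M) \<le> L * dist a b"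
    by (simp add: dist_real_def prob_space)
qed (use lipschitz_on_nonneg[OF g] in blast)

lemma graphon_section_measurable:
  assumes "graphon M W" and "x \<in> space M"
  shows "W x \<in> borel_measurable M"
proof -
  have "(\<lambda>(x, y). W x y) \<in> borel_measurable (M \<Otimes>\<^sub>M M)"
    using assms(1) unfolding graphon_def by blast
  from measurable_Pair2[OF this assms(2)] show ?thesis
    by simp
qed

lemma graphon_rhs_twins:
  assumes "graphon M W" and "twins M W A" and "A \<in> sets M" and "x \<in> A" and "x0 \<in> A"
    and "(\<lambda>y. g (v x) (v y)) \<in> borel_measurable M"
  shows "graphon_rhs f g M W v x = f (v x) (\<integral>y. W x0 y * g (v x) (v y) \<partial>M)"
proof -
  have "x \<in> space M" "x0 \<in> space M"
    using sets.sets_into_space assms(3-5) by auto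
  have "AE y in M. W x y = W x0 y"
    using assms(2,4,5) unfolding twins_def by blast
  then have "(\<integral>y. W x y * g (v x) (v y) \<partial>M) = (\<integral>y. W x0 y * g (v x) (v y) \<partial>M)"
    using graphon_section_measurable[OF assms(1)] \<open>x \<in> space M\<close> \<open>x0 \<in> space M\<close> assms(6)
    by (intro integral_cong_AE) auto
  then show ?thesis
    unfolding graphon_rhs_def by simp
qed

lemma set_integral_abs_le_nn_integral:
  fixes f g :: "'a \<Rightarrow> real"
  assumes "integrable M f" and "A \<in> sets M" and "\<And>x. x \<in> A \<Longrightarrow> f x = g x"
  shows "ennreal (LINT x:A|M. \<bar>f x\<bar>) \<le> (\<integral>\<^sup>+x. ennreal \<bar>g x\<bar> \<partial>M)"
proof -
  have "ennreal (LINT x:A|M. \<bar>f x\<bar>) = (\<integral>\<^sup>+x\<in>A. \<bar>f x\<bar> \<partial>M)"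
    using assms(1,2) by (intro nn_set_integral_eq_set_integral[symmetric]) auto
  also have "\<dots> \<le> (\<integral>\<^sup>+x. ennreal \<bar>g x\<bar> \<partial>M)"
    using assms(3) by (intro nn_integral_mono) (auto split: split_indicator)
  finally show ?thesis .
qed

lemma trajectory_dispersion_rate_bounded:
  assumes traj: "graphon_trajectory f g M W u" and A: "A \<in> sets M" "measure M A > 0"
    and G_lipschitz: "\<And>t. K-lipschitz_on UNIV (G t)"
    and G_integrable: "\<And>t. integrable M (\<lambda>x. G t (u t x))"
    and rhs: "\<And>t x. x \<in> A \<Longrightarrow> graphon_rhs f g M W (u t) x = G t (u t x)"
  shows "rate_bounded (2 * K) (\<lambda>t. cluster_dispersion M A (u t))"
  unfolding rate_bounded_def
proof (intro allI impI)
  fix t \<eta> :: real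
  assume "\<eta> > 0"
  have u: "integrable M (u s)" for s
    using traj unfolding graphon_trajectory_def by blast
  have lim: "((\<lambda>h. \<integral>\<^sup>+x. ennreal \<bar>(u (t + h) x - u t x) / h - graphon_rhs f g M W (u t) x\<bar> \<partial>M)
               \<longlongrightarrow> 0) (at 0)"
    using traj unfolding graphon_trajectory_def by blast
  have "0 < ennreal (\<eta> / 2)"
    using \<open>\<eta> > 0\<close> by simp
  note order_tendstoD(2)[OF lim this]
  moreover have "\<forall>\<^sub>F h in at 0. h \<noteq> 0"
    by (simp add: eventually_at_filter)
  ultimately show "\<forall>\<^sub>F h in at 0. \<bar>cluster_dispersion M A (u (t + h)) - cluster_dispersion M A (u t)\<bar>
                     \<le> \<bar>h\<bar> * (2 * K * cluster_dispersion M A (u t) + \<eta>)"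
  proof eventually_elim
    case (elim h)
    define q where "q x = (u (t + h) x - u t x) / h - G t (u t x)" for x
    have "integrable M q"
      unfolding q_def using u G_integrable by simp
    then have "ennreal (LINT x:A|M. \<bar>q x\<bar>)
        \<le> (\<integral>\<^sup>+x. ennreal \<bar>(u (t + h) x - u t x) / h - graphon_rhs f g M W (u t) x\<bar> \<partial>M)"
      using A(1) by (rule set_integral_abs_le_nn_integral) (simp add: q_def rhs)
    also note elim(1)
    finally have "ennreal (LINT x:A|M. \<bar>q x\<bar>) < ennreal (\<eta> / 2)" .
    moreover have "0 \<le> (LINT x:A|M. \<bar>q x\<bar>)"
      unfolding set_lebesgue_integral_def by (simp add: integral_nonneg_AE)
    ultimately have "2 * (LINT x:A|M. \<bar>q x\<bar>) \<le> \<eta>"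
      by (simp add: ennreal_less_iff)
    have "\<bar>cluster_dispersion M A (u (t + h)) - cluster_dispersion M A (u t)\<bar>
        \<le> 2 * \<bar>h\<bar> * (K * cluster_dispersion M A (u t) + (LINT x:A|M. \<bar>q x\<bar>))"
      unfolding q_def by (rule cluster_dispersion_increment_bound[OF A u u G_integrable G_lipschitz elim(2)])
    also have "\<dots> = \<bar>h\<bar> * (2 * K * cluster_dispersion M A (u t) + 2 * (LINT x:A|M. \<bar>q x\<bar>))"
      by (simp add: algebra_simps)
    also have "\<dots> \<le> \<bar>h\<bar> * (2 * K * cluster_dispersion M A (u t) + \<eta>)"
      using \<open>2 * (LINT x:A|M. \<bar>q x\<bar>) \<le> \<eta>\<close> by (intro mult_left_mono) auto
    finally show ?case .
  qed
qed

lemma twins_dispersion_rate_bounded: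
  assumes "lipschitz2 f" and "lipschitz2 g" and "graphon M W"
    and "A \<in> sets M" and "measure M A > 0" and "twins M W A"
    and traj: "graphon_trajectory f g M W u"
  obtains K where "K \<ge> 0" and "rate_bounded K (\<lambda>t. cluster_dispersion M A (u t))"
proof -
  interpret prob_space M
    using assms(3) unfolding graphon_def by blast
  obtain Lf where f1: "\<And>b. Lf-lipschitz_on UNIV (\<lambda>a. f a b)" and f2: "\<And>a. Lf-lipschitz_on UNIV (f a)"
    by (rule lipschitz2_partials[OF assms(1)]) (rule that)
  obtain Lg where g1: "\<And>b. Lg-lipschitz_on UNIV (\<lambda>a. g a b)" and g2: "\<And>a. Lg-lipschitz_on UNIV (g a)"
    by (rule lipschitz2_partials[OF assms(2)]) (rule that)
  define K where "K = Lf * (1 + Lg)"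
  obtain x0 where "x0 \<in> A"
    using assms(5) by fastforce
  then have "x0 \<in> space M"
    using sets.sets_into_space[OF assms(4)] by blast
  have W_x0: "W x0 \<in> borel_measurable M" "\<And>y. y \<in> space M \<Longrightarrow> \<bar>W x0 y\<bar> \<le> 1"
    using graphon_section_measurable[OF assms(3) \<open>x0 \<in> space M\<close>] assms(3) \<open>x0 \<in> space M\<close>
    unfolding graphon_def by auto
  have u: "integrable M (u t)" for t
    using traj unfolding graphon_trajectory_def by blast
  have gu: "integrable M (\<lambda>y. g c (u t y))" for c t
    using integrable_lipschitz_comp[OF g2 u] .
  \<comment> \<open>By the twin property, the right-hand side on \<open>A\<close> can be computed from any fixed \<open>x0 \<in> A\<close>.\<close>
  define G where "G t c = f c (\<integral>y. W x0 y * g c (u t y) \<partial>M)" for t c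
  have G_lipschitz: "K-lipschitz_on UNIV (G t)" for t
    unfolding G_def K_def using f1 f2 lipschitz_on_weighted_integral[OF W_x0 gu g1]
    by (rule lipschitz_on_compose_diag)
  have "graphon_rhs f g M W (u t) x = G t (u t x)" if "x \<in> A" for t x
    unfolding G_def using graphon_rhs_twins[where v = "u t", OF assms(3,6,4) that \<open>x0 \<in> A\<close>]
      borel_measurable_integrable[OF gu] by blast
  with traj assms(4,5) G_lipschitz integrable_lipschitz_comp[OF G_lipschitz u]
  have "rate_bounded (2 * K) (\<lambda>t. cluster_dispersion M A (u t))"
    by (rule trajectory_dispersion_rate_bounded)
  moreover have "2 * K \<ge> 0"
    unfolding K_def using lipschitz_on_nonneg[OF f2] lipschitz_on_nonneg[OF g2] by simp
  ultimately show ?thesis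
    using that by blast
qed

theorem theorem4p3:
  fixes f g :: "real \<Rightarrow> real \<Rightarrow> real"
    and M :: "'a measure" and W :: "'a \<Rightarrow> 'a \<Rightarrow> real" and A :: "'a set"
  assumes "lipschitz2 f" and "lipschitz2 g"
    and "graphon M W"
    and "A \<in> sets M" and "measure M A > 0"
    and "twins M W A"
  shows "dyn_invariant f g M W (cluster_subspace M A)"
  unfolding dyn_invariant_def
proof (intro allI impI, elim conjE)
  fix u t0 t
  assume traj: "graphon_trajectory f g M W u" and start: "u t0 \<in> cluster_subspace M A"
  note cluster_iff = cluster_subspace_iff_dispersion[OF assms(4,5)]
  obtain K where "K \<ge> 0" and rate: "rate_bounded K (\<lambda>s. cluster_dispersion M A (u s))"
    using twins_dispersion_rate_bounded[OF assms traj] .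
  have "cluster_dispersion M A (u t0) = 0"
    using start unfolding cluster_iff by (rule conjunct2)
  then have "cluster_dispersion M A (u t) = 0"
    using rate_bounded_eq_0[OF rate \<open>K \<ge> 0\<close> cluster_dispersion_nonneg] by simp
  moreover have "integrable M (u t)"
    using traj unfolding graphon_trajectory_def by blast
  ultimately show "u t \<in> cluster_subspace M A"
    unfolding cluster_iff by blast
qed

end
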